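(* Let $\mathcal{S}\subseteq\mathcal{P}_{fin}(\mathbb{N})$ be an IP set, $r\geq1$, and $c:\mathcal{S}\rightarrow[1,r]$ a coloring. Then at least one of the following holds: (1) there is an IP set $\mathcal{S}'\subseteq\mathcal{S}$ such that $c$ is constant on $\mathcal{S}'$; or (2) there are a finite collection $\mathcal{B}\subseteq\mathcal{S}$ and an IP set $\mathcal{T}\subseteq\mathcal{S}-\mathcal{B}$ such that $\mathcal{B}$ full-matches $\mathcal{T}$.
   Context: $\mathcal{P}_{fin}(\mathbb{N})$ is the set of finite subsets of $\mathbb{N}$. A set $\mathcal{S}\subseteq\mathcal{P}_{fin}(\mathbb{N})$ is an IP set if it is closed under finite unions and contains an infinite family of pairwise disjoint elements. For $B\in\mathcal{S}$, $\mathcal{S}-B:=\{T\in\mathcal{S}: T\cap B=\emptyset\}$, and for $\mathcal{B}\subseteq\mathcal{S}$, $\mathcal{S}-\mathcal{B}:=\bigcap_{B\in\mathcal{B}}(\mathcal{S}-B)$. Relative to a coloring $c$: a family $\mathcal{D}$ full-matches a set $B$ if there is $D\in\mathcal{D}$ with $c(D)=c(B)=c(D\cup B)$; $\mathcal{D}$ full-matches a family $\mathcal{B}$ if it full-matches every $B\in\mathcal{B}$. *)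

theory Defs
  imports Main
begin

definition IP_set :: "nat set set \<Rightarrow> bool" where
  "IP_set S \<longleftrightarrow>
     (\<forall>A\<in>S. finite A) \<and>
     (\<forall>F. finite F \<and> F \<noteq> {} \<and> F \<subseteq> S \<longrightarrow> \<Union>F \<in> S) \<and>
     (\<exists>D. infinite D \<and> D \<subseteq> S \<and> (\<forall>A\<in>D. \<forall>B\<in>D. A \<noteq> B \<longrightarrow> A \<inter> B = {}))"

definition minus_family :: "nat set set \<Rightarrow> nat set set \<Rightarrow> nat set set" where
  "minus_family S \<B> = {T \<in> S. \<forall>B\<in>\<B>. T \<inter> B = {}}"

definition full_matches_set :: "(nat set \<Rightarrow> nat) \<Rightarrow> nat set set \<Rightarrow> nat set \<Rightarrow> bool" where
  "full_matches_set c \<D> B \<longleftrightarrow> (\<exists>D\<in>\<D>. c D = c B \<and> c B = c (D \<union> B))"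

definition full_matches :: "(nat set \<Rightarrow> nat) \<Rightarrow> nat set set \<Rightarrow> nat set set \<Rightarrow> bool" where
  "full_matches c \<D> \<B> \<longleftrightarrow> (\<forall>B\<in>\<B>. full_matches_set c \<D> B)"

end

theory Submission
  imports Defs
begin

(* The first alternative of the theorem always holds: it is Hindman's finite unions theorem,
   relativised to an arbitrary IP set.  We prove
   Hindman's theorem by the Galvin-Glazer ultrafilter method.

   1. Ultrafilters: the ultrafilter lemma (every proper filter is refined by an ultrafilter).
   2. The semigroup: ultrafilters on finite nonempty sets of naturals that contain, for each n,
      the family of sets lying above n, with the operation  p \<oplus> q  induced by union.
      The operation is associative and the set is closed under it.
   3. Ellis-Numakura: a minimal closed subsemigroup (Zorn) contains an idempotent  p \<oplus> p = p.
      Closedness is the Stone topology expressed through filters: q belongs to the closure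
      of K iff every set common to all members of K is in q.
   4. Hindman: for an idempotent p, every set in p contains a p-large subset that is invariant
      under "F \<mapsto> F \<union> G for p-many G"; from it a sequence of disjoint blocks all of whose
      finite unions stay in the set is built by dependent choice.
   5. Transfer: an IP set contains a sequence of disjoint nonempty sets d; colouring finite
      sets of indices by  c (\<Union> d ` G)  and condensing d along the blocks of step 4 yields
      a monochromatic IP subset. *)

section \<open>Ultrafilters\<close>

definition ultrafilter :: "'a filter \<Rightarrow> bool" where
  "ultrafilter F \<longleftrightarrow> F \<noteq> bot \<and> (\<forall>P. eventually P F \<or> eventually (\<lambda>x. \<not> P x) F)"

lemma ultrafilter_not_eventually:
  assumes "ultrafilter F"
  shows "eventually (\<lambda>x. \<not> P x) F \<longleftrightarrow> \<not> eventually P F"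
  using assms eventually_frequently[of F P] unfolding ultrafilter_def frequently_def by blast

lemma ultrafilter_le_imp_eq:
  assumes F: "ultrafilter F" and G: "ultrafilter G" and le: "G \<le> F"
  shows "G = F"
proof (rule antisym[OF le], unfold le_filter_def, intro allI impI)
  fix P assume "eventually P G"
  then have "\<not> eventually (\<lambda>x. \<not> P x) G" using ultrafilter_not_eventually[OF G] by blast
  then have "\<not> eventually (\<lambda>x. \<not> P x) F" using le unfolding le_filter_def by blast
  then show "eventually P F" using ultrafilter_not_eventually[OF F] by blast
qed

lemma eventually_Inf_chain:
  assumes "C \<noteq> {}" and chain: "\<And>F G. F \<in> C \<Longrightarrow> G \<in> C \<Longrightarrow> F \<le> G \<or> G \<le> F"
  shows "eventually P (Inf C) \<longleftrightarrow> (\<exists>F\<in>C. eventually P F)"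
  using assms(1)
proof (rule eventually_Inf_base)
  fix F G assume "F \<in> C" "G \<in> C"
  then show "\<exists>H\<in>C. H \<le> inf F G" using chain[of F G] by (auto simp: inf_absorb1 inf_absorb2)
qed

lemma Inf_chain_not_bot:
  fixes C :: "'a filter set"
  assumes "C \<noteq> {}" and "\<And>F G. F \<in> C \<Longrightarrow> G \<in> C \<Longrightarrow> F \<le> G \<or> G \<le> F" and "bot \<notin> C"
  shows "Inf C \<noteq> bot"
  using eventually_Inf_chain[OF assms(1,2), of "\<lambda>_. False"] assms(3)
  by (auto simp: eventually_False)

lemma maximal_filter_ultrafilter:
  assumes U: "U \<noteq> bot" and max: "\<And>G. G \<noteq> bot \<Longrightarrow> G \<le> U \<Longrightarrow> G = U"
  shows "ultrafilter U"
proof -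
  have "eventually P U" if "\<not> eventually (\<lambda>x. \<not> P x) U" for P
  proof -
    have "inf U (principal {x. P x}) \<noteq> bot"
      using that by (auto simp: trivial_limit_def eventually_inf_principal)
    then have "inf U (principal {x. P x}) = U" by (rule max) simp
    moreover have "eventually P (inf U (principal {x. P x}))" by (simp add: eventually_inf_principal)
    ultimately show ?thesis by simp
  qed
  with U show ?thesis by (auto simp: ultrafilter_def)
qed

(* The ultrafilter lemma: by Zorn, F has a maximal proper refinement, which is an ultrafilter. *)
lemma ultrafilter_below:
  fixes F :: "'a filter"
  assumes "F \<noteq> bot"
  shows "\<exists>U. U \<le> F \<and> ultrafilter U"
proof -
  let ?A = "{G. G \<noteq> bot \<and> G \<le> F}"
  have "\<exists>U\<in>?A. \<forall>G\<in>?A. G \<le> U \<longrightarrow> G = U"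
  proof (rule predicate_Zorn)
    show "partial_order_on ?A (relation_of (\<lambda>G H. H \<le> G) ?A)"
      unfolding partial_order_on_def preorder_on_def refl_on_def trans_on_def antisym_on_def
        relation_of_def by auto
  next
    fix C assume "C \<in> Chains (relation_of (\<lambda>G H. H \<le> G) ?A)"
    then have sub: "C \<subseteq> ?A" and chain: "\<And>G H. G \<in> C \<Longrightarrow> H \<in> C \<Longrightarrow> G \<le> H \<or> H \<le> G"
      by (auto simp: Chains_def relation_of_def)
    show "\<exists>U\<in>?A. \<forall>G\<in>C. U \<le> G"
    proof (cases "C = {}")
      case True
      then show ?thesis using assms by blast
    next
      case False
      then obtain G where "G \<in> C" by blast
      then have "Inf C \<le> F" using sub by (blast intro: Inf_lower2)
      moreover have "Inf C \<noteq> bot" using Inf_chain_not_bot[OF False chain] sub by blast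
      ultimately show ?thesis by (intro bexI[of _ "Inf C"]) (auto intro: Inf_lower)
    qed
  qed
  then obtain U where U: "U \<noteq> bot" "U \<le> F" and maximal: "\<forall>G\<in>?A. G \<le> U \<longrightarrow> G = U"
    by blast
  have "ultrafilter U"
  proof (rule maximal_filter_ultrafilter[OF U(1)])
    show "G = U" if "G \<noteq> bot" "G \<le> U" for G
      using maximal that order_trans[OF that(2) U(2)] by blast
  qed
  with U(2) show ?thesis by blast
qed

section \<open>The semigroup of tail ultrafilters\<close>

definition block_above :: "nat \<Rightarrow> nat set \<Rightarrow> bool" where
  "block_above n F \<longleftrightarrow> finite F \<and> F \<noteq> {} \<and> (\<forall>x\<in>F. n < x)"

(* The closed subsemigroup of the Stone-Cech compactification on which union behaves like a
   disjoint union: ultrafilters concentrating on blocks above every n. *)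
definition tail_ultrafilters :: "nat set filter set" where
  "tail_ultrafilters = {p. ultrafilter p \<and> (\<forall>n. eventually (block_above n) p)}"

definition usum :: "nat set filter \<Rightarrow> nat set filter \<Rightarrow> nat set filter" (infixl "\<oplus>" 65) where
  "p \<oplus> q = Abs_filter (\<lambda>P. eventually (\<lambda>F. eventually (\<lambda>G. P (F \<union> G)) q) p)"

lemma eventually_usum:
  "eventually P (p \<oplus> q) \<longleftrightarrow> eventually (\<lambda>F. eventually (\<lambda>G. P (F \<union> G)) q) p"
  unfolding usum_def
proof (rule eventually_Abs_filter, rule is_filter.intro)
  fix P Q :: "nat set \<Rightarrow> bool"
  assume "eventually (\<lambda>F. eventually (\<lambda>G. P (F \<union> G)) q) p"
    and "eventually (\<lambda>F. eventually (\<lambda>G. Q (F \<union> G)) q) p"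
  then show "eventually (\<lambda>F. eventually (\<lambda>G. P (F \<union> G) \<and> Q (F \<union> G)) q) p"
    by eventually_elim (simp add: eventually_conj_iff)
next
  fix P Q :: "nat set \<Rightarrow> bool"
  assume "\<forall>x. P x \<longrightarrow> Q x" and "eventually (\<lambda>F. eventually (\<lambda>G. P (F \<union> G)) q) p"
  then show "eventually (\<lambda>F. eventually (\<lambda>G. Q (F \<union> G)) q) p"
    by (elim eventually_mono) (auto elim: eventually_mono)
qed simp

lemma usum_assoc: "(p \<oplus> q) \<oplus> s = p \<oplus> (q \<oplus> s)"
  by (simp add: filter_eq_iff eventually_usum Un_assoc)

lemma ultrafilter_usum:
  assumes p: "ultrafilter p" and q: "ultrafilter q"
  shows "ultrafilter (p \<oplus> q)"
  unfolding ultrafilter_def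
proof (intro conjI allI)
  have "\<not> eventually (\<lambda>_. False) p" "\<not> eventually (\<lambda>_. False) q"
    using p q by (auto simp: ultrafilter_def eventually_False)
  then show "p \<oplus> q \<noteq> bot"
    by (simp add: trivial_limit_def eventually_usum)
next
  fix P
  have "eventually (\<lambda>x. \<not> P x) (p \<oplus> q) \<longleftrightarrow> \<not> eventually P (p \<oplus> q)"
    by (simp add: eventually_usum ultrafilter_not_eventually[OF q] ultrafilter_not_eventually[OF p])
  then show "eventually P (p \<oplus> q) \<or> eventually (\<lambda>x. \<not> P x) (p \<oplus> q)" by blast
qed

lemma usum_tail_ultrafilters:
  assumes p: "p \<in> tail_ultrafilters" and q: "q \<in> tail_ultrafilters"
  shows "p \<oplus> q \<in> tail_ultrafilters"
proof -
  have "eventually (block_above n) (p \<oplus> q)" for n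
  proof -
    have "eventually (block_above n) p" "eventually (block_above n) q"
      using p q by (auto simp: tail_ultrafilters_def)
    then show ?thesis unfolding eventually_usum
      by (auto elim!: eventually_mono simp: block_above_def)
  qed
  with p q show ?thesis by (simp add: tail_ultrafilters_def ultrafilter_usum)
qed

(* An ultrafilter below the decreasing chain of principal filters of blocks above n. *)
lemma tail_ultrafilters_nonempty: "tail_ultrafilters \<noteq> {}"
proof -
  let ?B = "range (\<lambda>n. principal {F. block_above n F})"
  have mono: "principal {F. block_above n F} \<le> principal {F. block_above m F}" if "m \<le> n" for m n
    using that by (auto simp: block_above_def)
  have "Inf ?B \<noteq> bot"
  proof (rule Inf_chain_not_bot)
    show "bot \<notin> ?B"
    proof
      assume "bot \<in> ?B"
      then obtain n where "principal {F. block_above n F} = bot" by (auto simp: eq_commute)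
      then have "{F. block_above n F} = {}" by (simp add: principal_eq_bot_iff)
      moreover have "block_above n {Suc n}" by (simp add: block_above_def)
      ultimately show False by blast
    qed
    show "F \<le> G \<or> G \<le> F" if FG: "F \<in> ?B" "G \<in> ?B" for F G
    proof -
      obtain m n where "F = principal {F. block_above m F}" "G = principal {F. block_above n F}"
        using FG by blast
      then show ?thesis using mono[of m n] mono[of n m] by (cases "m \<le> n") auto
    qed
  qed simp
  then obtain U where U: "U \<le> Inf ?B" "ultrafilter U" using ultrafilter_below by blast
  have "U \<le> principal {F. block_above n F}" for n
    using U(1) by (blast intro: order_trans Inf_lower)
  then have "U \<in> tail_ultrafilters" using U(2) by (simp add: tail_ultrafilters_def le_principal)
  then show ?thesis by blast
qed

section \<open>Idempotents: the Ellis-Numakura lemma\<close>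

(* K is closed in the Stone topology: every tail ultrafilter containing all sets common to the
   members of K (i.e. every point of the closure of K) belongs to K. *)
definition closed_family :: "nat set filter set \<Rightarrow> bool" where
  "closed_family K \<longleftrightarrow> (\<forall>q\<in>tail_ultrafilters. q \<le> Sup K \<longrightarrow> q \<in> K)"

definition closed_subsemigroup :: "nat set filter set \<Rightarrow> bool" where
  "closed_subsemigroup K \<longleftrightarrow> K \<subseteq> tail_ultrafilters \<and> K \<noteq> {} \<and> closed_family K
     \<and> (\<forall>p\<in>K. \<forall>q\<in>K. p \<oplus> q \<in> K)"

lemma closed_subsemigroup_tail_ultrafilters: "closed_subsemigroup tail_ultrafilters"
  using tail_ultrafilters_nonempty usum_tail_ultrafilters
  by (auto simp: closed_subsemigroup_def closed_family_def)

lemma eventually_block_above_Sup: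
  "K \<subseteq> tail_ultrafilters \<Longrightarrow> eventually (block_above n) (Sup K)"
  by (auto simp: eventually_Sup tail_ultrafilters_def)

(* Compactness: the intersection of a chain of closed subsemigroups is nonempty, witnessed by
   an ultrafilter below the infimum of the chain of their suprema. *)
lemma closed_subsemigroup_Inter_chain:
  assumes "C \<noteq> {}" and sub: "\<And>K. K \<in> C \<Longrightarrow> closed_subsemigroup K"
    and chain: "\<And>K L. K \<in> C \<Longrightarrow> L \<in> C \<Longrightarrow> K \<subseteq> L \<or> L \<subseteq> K"
  shows "closed_subsemigroup (\<Inter>C)"
proof -
  obtain K0 where K0: "K0 \<in> C" using assms(1) by blast
  have K: "K \<subseteq> tail_ultrafilters" "K \<noteq> {}" "closed_family K" if "K \<in> C" for K
    using sub[OF that] by (auto simp: closed_subsemigroup_def)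
  have "Inf (Sup ` C) \<noteq> bot"
  proof (rule Inf_chain_not_bot)
    show "F \<le> G \<or> G \<le> F" if FG: "F \<in> Sup ` C" "G \<in> Sup ` C" for F G
    proof -
      obtain K L where "K \<in> C" "L \<in> C" "F = Sup K" "G = Sup L" using FG by blast
      then show ?thesis using chain[of K L] Sup_subset_mono[of K L] Sup_subset_mono[of L K] by blast
    qed
    show "bot \<notin> Sup ` C"
    proof
      assume "bot \<in> Sup ` C"
      then obtain L where L: "L \<in> C" "Sup L = bot" by (auto simp: eq_commute)
      obtain p where "p \<in> L" using K(2)[OF L(1)] by blast
      then have "p \<le> Sup L" by (rule Sup_upper)
      then have "p = bot" using L(2) by (simp add: bot_unique)
      moreover have "p \<in> tail_ultrafilters" using K(1)[OF L(1)] \<open>p \<in> L\<close> by blast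
      ultimately show False by (simp add: tail_ultrafilters_def ultrafilter_def)
    qed
  qed (use assms(1) in simp)
  then obtain U where U: "U \<le> Inf (Sup ` C)" "ultrafilter U" using ultrafilter_below by blast
  have below: "U \<le> Sup K" if "K \<in> C" for K
    using U(1) that by (blast intro: order_trans Inf_lower)
  have "U \<in> tail_ultrafilters"
    using U(2) below[OF K0] eventually_block_above_Sup[OF K(1)[OF K0]]
    by (auto simp: tail_ultrafilters_def le_filter_def)
  then have "U \<in> \<Inter>C" using below K(3) by (auto simp: closed_family_def)
  moreover have "closed_family (\<Inter>C)"
    unfolding closed_family_def
  proof (intro ballI impI InterI)
    fix q K assume q: "q \<in> tail_ultrafilters" "q \<le> Sup (\<Inter>C)" and "K \<in> C"
    then have "q \<le> Sup K" by (blast intro: order_trans Sup_subset_mono)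
    then show "q \<in> K" using q(1) K(3)[OF \<open>K \<in> C\<close>] by (simp add: closed_family_def)
  qed
  moreover have "\<Inter>C \<subseteq> tail_ultrafilters" using K(1)[OF K0] K0 by blast
  moreover have "\<forall>p\<in>\<Inter>C. \<forall>q\<in>\<Inter>C. p \<oplus> q \<in> \<Inter>C"
    using sub by (auto simp: closed_subsemigroup_def)
  ultimately show ?thesis by (auto simp: closed_subsemigroup_def)
qed

lemma minimal_closed_subsemigroup:
  "\<exists>K. closed_subsemigroup K \<and> (\<forall>L. closed_subsemigroup L \<and> L \<subseteq> K \<longrightarrow> L = K)"
proof -
  let ?A = "{K. closed_subsemigroup K}"
  have "\<exists>K\<in>?A. \<forall>L\<in>?A. L \<subseteq> K \<longrightarrow> L = K"
  proof (rule predicate_Zorn)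
    show "partial_order_on ?A (relation_of (\<lambda>K L. L \<subseteq> K) ?A)"
      unfolding partial_order_on_def preorder_on_def refl_on_def trans_on_def antisym_on_def
        relation_of_def by auto
  next
    fix C assume "C \<in> Chains (relation_of (\<lambda>K L. L \<subseteq> K) ?A)"
    then have sub: "C \<subseteq> ?A" and chain: "\<And>K L. K \<in> C \<Longrightarrow> L \<in> C \<Longrightarrow> K \<subseteq> L \<or> L \<subseteq> K"
      by (auto simp: Chains_def relation_of_def)
    show "\<exists>U\<in>?A. \<forall>K\<in>C. U \<subseteq> K"
    proof (cases "C = {}")
      case True
      then show ?thesis using closed_subsemigroup_tail_ultrafilters by blast
    next
      case False
      then have "closed_subsemigroup (\<Inter>C)"
        using sub chain by (intro closed_subsemigroup_Inter_chain) auto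
      then show ?thesis by blast
    qed
  qed
  then show ?thesis by blast
qed

(* The filter generated by the sets {F. Q holds for p-many F \<union> G}, Q \<in> s: the preimage of s
   under right translation by p: whenever r refines it, r \<oplus> p refines s. *)
definition translate_preimage :: "nat set filter \<Rightarrow> nat set filter \<Rightarrow> nat set filter" where
  "translate_preimage s p = (INF Q\<in>{Q. eventually Q s}. principal {F. eventually (\<lambda>G. Q (F \<union> G)) p})"

lemma eventually_translate_preimage:
  "eventually R (translate_preimage s p) \<longleftrightarrow>
     (\<exists>Q. eventually Q s \<and> (\<forall>F. eventually (\<lambda>G. Q (F \<union> G)) p \<longrightarrow> R F))"
  unfolding translate_preimage_def
proof (subst eventually_INF_base)
  fix Q1 Q2 assume "Q1 \<in> {Q. eventually Q s}" "Q2 \<in> {Q. eventually Q s}"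
  then show "\<exists>Q\<in>{Q. eventually Q s}. principal {F. eventually (\<lambda>G. Q (F \<union> G)) p}
      \<le> inf (principal {F. eventually (\<lambda>G. Q1 (F \<union> G)) p}) (principal {F. eventually (\<lambda>G. Q2 (F \<union> G)) p})"
    by (intro bexI[of _ "\<lambda>x. Q1 x \<and> Q2 x"]) (auto simp: eventually_conj_iff)
qed (auto simp: eventually_principal intro!: exI[of _ "\<lambda>_. True"])

(* Right translation r \<mapsto> r \<oplus> p is continuous, so it maps the compact set K onto a closed set.
   Given s in the closure of K \<oplus> p, the translate preimage of s is compatible with Sup K; an
   ultrafilter U refining both lies in K and satisfies U \<oplus> p = s. *)
lemma closed_family_right_translate:
  assumes K: "K \<subseteq> tail_ultrafilters" "closed_family K" and p: "p \<in> tail_ultrafilters"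
  shows "closed_family ((\<lambda>r. r \<oplus> p) ` K)"
  unfolding closed_family_def
proof (intro ballI impI)
  fix s assume s: "s \<in> tail_ultrafilters" "s \<le> Sup ((\<lambda>r. r \<oplus> p) ` K)"
  have us: "ultrafilter s" and up: "ultrafilter p" using s p by (auto simp: tail_ultrafilters_def)
  let ?E = "translate_preimage s p"
  have "inf (Sup K) ?E \<noteq> bot"
  proof
    assume "inf (Sup K) ?E = bot"
    then obtain R Q where R: "eventually R (Sup K)" and Q: "eventually Q s"
      and RQ: "\<And>F. R F \<Longrightarrow> \<not> eventually (\<lambda>G. Q (F \<union> G)) p"
      unfolding trivial_limit_def eventually_inf eventually_translate_preimage by blast
    have "eventually (\<lambda>x. \<not> Q x) (r \<oplus> p)" if "r \<in> K" for r
      using R that unfolding eventually_Sup eventually_usum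
      by (auto elim!: eventually_mono dest!: RQ simp: ultrafilter_not_eventually[OF up])
    then have "eventually (\<lambda>x. \<not> Q x) s"
      using s(2) unfolding le_filter_def by (simp add: eventually_Sup)
    with Q show False using ultrafilter_not_eventually[OF us] by blast
  qed
  then obtain U where U: "U \<le> inf (Sup K) ?E" "ultrafilter U" using ultrafilter_below by blast
  then have USK: "U \<le> Sup K" by simp
  then have "U \<in> tail_ultrafilters"
    using U(2) eventually_block_above_Sup[OF K(1)] by (auto simp: tail_ultrafilters_def le_filter_def)
  then have UK: "U \<in> K" using USK K(2) by (simp add: closed_family_def)
  have "U \<oplus> p \<le> s"
    unfolding le_filter_def eventually_usum
  proof (intro allI impI)
    fix P assume "eventually P s"
    then have "eventually (\<lambda>F. eventually (\<lambda>G. P (F \<union> G)) p) ?E"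
      unfolding eventually_translate_preimage by blast
    then show "eventually (\<lambda>F. eventually (\<lambda>G. P (F \<union> G)) p) U"
      using U(1) by (simp add: le_filter_def eventually_inf) (meson eventually_True)
  qed
  then have "U \<oplus> p = s" using ultrafilter_le_imp_eq[OF us ultrafilter_usum[OF U(2) up]] by blast
  with UK show "s \<in> (\<lambda>r. r \<oplus> p) ` K" by blast
qed

lemma closed_subsemigroup_right_translate:
  assumes K: "closed_subsemigroup K" and p: "p \<in> K"
  shows "closed_subsemigroup ((\<lambda>r. r \<oplus> p) ` K)"
proof -
  have "a \<oplus> p \<oplus> (b \<oplus> p) = (a \<oplus> p \<oplus> b) \<oplus> p" for a b by (simp add: usum_assoc)
  then show ?thesis
    using K p closed_family_right_translate[of K p] usum_tail_ultrafilters
    unfolding closed_subsemigroup_def by (auto simp: image_iff)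
qed

(* The stabiliser of p in K is closed: if r lies in its closure, then r \<oplus> p refines p. *)
lemma closed_subsemigroup_stabilizer:
  assumes K: "closed_subsemigroup K" and p: "p \<in> K" and ne: "\<exists>q\<in>K. q \<oplus> p = p"
  shows "closed_subsemigroup {q\<in>K. q \<oplus> p = p}"
proof -
  let ?L = "{q\<in>K. q \<oplus> p = p}"
  have KT: "K \<subseteq> tail_ultrafilters" and "closed_family K"
    using K by (auto simp: closed_subsemigroup_def)
  have up: "ultrafilter p" using KT p by (auto simp: tail_ultrafilters_def)
  have "closed_family ?L"
    unfolding closed_family_def
  proof (intro ballI impI)
    fix r assume r: "r \<in> tail_ultrafilters" "r \<le> Sup ?L"
    then have "r \<le> Sup K" by (blast intro: order_trans Sup_subset_mono)
    then have rK: "r \<in> K" using r(1) \<open>closed_family K\<close> by (simp add: closed_family_def)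
    have "r \<oplus> p \<le> p"
      unfolding le_filter_def
    proof (intro allI impI)
      fix P assume "eventually P p"
      then have "eventually (\<lambda>F. eventually (\<lambda>G. P (F \<union> G)) p) l" if "l \<in> ?L" for l
        using that eventually_usum[of P l p] by simp
      then have "eventually (\<lambda>F. eventually (\<lambda>G. P (F \<union> G)) p) (Sup ?L)"
        by (simp add: eventually_Sup)
      then show "eventually P (r \<oplus> p)"
        using r(2) by (simp add: le_filter_def eventually_usum)
    qed
    then have "r \<oplus> p = p"
      using r(1) up by (intro ultrafilter_le_imp_eq) (auto simp: tail_ultrafilters_def ultrafilter_usum)
    with rK show "r \<in> ?L" by blast
  qed
  then show ?thesis
    using K ne by (auto simp: closed_subsemigroup_def usum_assoc)
qed

(* Ellis-Numakura: in a minimal closed subsemigroup K with p \<in> K, first K \<oplus> p = K, so the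
   stabiliser of p is nonempty; then the stabiliser is all of K, in particular p \<oplus> p = p. *)
lemma idempotent_exists: "\<exists>p\<in>tail_ultrafilters. p \<oplus> p = p"
proof -
  obtain K where K: "closed_subsemigroup K"
    and min: "\<And>L. closed_subsemigroup L \<Longrightarrow> L \<subseteq> K \<Longrightarrow> L = K"
    using minimal_closed_subsemigroup by blast
  obtain p where p: "p \<in> K" using K by (auto simp: closed_subsemigroup_def)
  have "(\<lambda>r. r \<oplus> p) ` K \<subseteq> K" using K p by (auto simp: closed_subsemigroup_def)
  then have "(\<lambda>r. r \<oplus> p) ` K = K" using min closed_subsemigroup_right_translate[OF K p] by blast
  then have "\<exists>q\<in>K. q \<oplus> p = p" using p by (metis imageE)
  then have "{q\<in>K. q \<oplus> p = p} = K" using min closed_subsemigroup_stabilizer[OF K p] by blast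
  then show ?thesis using p K by (auto simp: closed_subsemigroup_def)
qed

section \<open>Hindman's theorem\<close>

definition block_sequence :: "(nat \<Rightarrow> nat set) \<Rightarrow> bool" where
  "block_sequence e \<longleftrightarrow> (\<forall>i. finite (e i) \<and> e i \<noteq> {}) \<and> (\<forall>i j. i \<noteq> j \<longrightarrow> e i \<inter> e j = {})"

definition FU :: "(nat \<Rightarrow> nat set) \<Rightarrow> nat set set" where
  "FU e = (\<lambda>G. \<Union>(e ` G)) ` {G. finite G \<and> G \<noteq> {}}"

lemma FU_iff: "A \<in> FU e \<longleftrightarrow> (\<exists>G. finite G \<and> G \<noteq> {} \<and> A = \<Union>(e ` G))"
  unfolding FU_def by blast

lemma ultrafilter_finite_range:
  assumes p: "ultrafilter p" and "finite C" and range: "eventually (\<lambda>x. f x \<in> C) p"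
  shows "\<exists>k. eventually (\<lambda>x. f x = k) p"
proof (rule ccontr)
  assume "\<nexists>k. eventually (\<lambda>x. f x = k) p"
  then have "\<forall>k\<in>C. eventually (\<lambda>x. f x \<noteq> k) p" using ultrafilter_not_eventually[OF p] by blast
  then have "eventually (\<lambda>x. \<forall>k\<in>C. f x \<noteq> k) p" by (rule eventually_ball_finite[OF \<open>finite C\<close>])
  with range have "eventually (\<lambda>_. False) p" by eventually_elim blast
  with p show False by (simp add: ultrafilter_def)
qed

(* Galvin's star trick: for idempotent p, a p-large set A contains the p-large set
   A' = {F \<in> A. p-many G have F \<union> G \<in> A}, which is invariant: every F \<in> A' has
   F \<union> G \<in> A' for p-many G. *)
lemma idempotent_invariant_subset:
  assumes idem: "p \<oplus> p = p" and A: "eventually A p"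
  shows "\<exists>A'. (\<forall>F. A' F \<longrightarrow> A F) \<and> eventually A' p \<and> (\<forall>F. A' F \<longrightarrow> eventually (\<lambda>G. A' (F \<union> G)) p)"
proof -
  have split: "eventually Q p \<Longrightarrow> eventually (\<lambda>F. eventually (\<lambda>G. Q (F \<union> G)) p) p" for Q
    using eventually_usum[of Q p p] idem by simp
  define A' where "A' = (\<lambda>F. A F \<and> eventually (\<lambda>G. A (F \<union> G)) p)"
  have "eventually A' p"
    unfolding A'_def using A split[OF A] by (rule eventually_conj)
  moreover have "eventually (\<lambda>G. A' (F \<union> G)) p" if "A' F" for F
  proof -
    have AF: "eventually (\<lambda>G. A (F \<union> G)) p" using that by (simp add: A'_def)
    show ?thesis
      using AF split[OF AF] unfolding A'_def by eventually_elim (simp add: Un_assoc)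
  qed
  moreover have "\<forall>F. A' F \<longrightarrow> A F" by (simp add: A'_def)
  ultimately show ?thesis by blast
qed

lemma union_in_family:
  assumes "h 0 \<in> W 0" and W_Suc: "\<And>n. W (Suc n) = W n \<union> {h (Suc n)} \<union> (\<lambda>Y. Y \<union> h (Suc n)) ` W n"
  shows "G \<subseteq> {..n} \<Longrightarrow> G \<noteq> {} \<Longrightarrow> \<Union>(h ` G) \<in> W n"
proof (induction n arbitrary: G)
  case 0
  then have "G = {0}" by auto
  then show ?case using assms(1) by simp
next
  case (Suc n)
  let ?G = "G - {Suc n}"
  have G: "?G \<subseteq> {..n}" using Suc.prems(1) by (auto simp: le_Suc_eq)
  consider "Suc n \<notin> G" | "G = {Suc n}" | "Suc n \<in> G" "?G \<noteq> {}" by blast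
  then show ?case
  proof cases
    case 1
    then show ?thesis using Suc.IH[OF _ Suc.prems(2)] G W_Suc[of n] by auto
  next
    case 2
    then show ?thesis using W_Suc[of n] by simp
  next
    case 3
    then have "\<Union>(h ` G) = \<Union>(h ` ?G) \<union> h (Suc n)" by blast
    then show ?thesis using Suc.IH[OF G 3(2)] W_Suc[of n] by auto
  qed
qed

lemma block_sequence_from_growing_family:
  assumes h_in_W: "\<And>n. h n \<in> W n" and blocks: "\<And>n. block_above 0 (h n)"
    and W_Suc: "\<And>n. W (Suc n) = W n \<union> {h (Suc n)} \<union> (\<lambda>Y. Y \<union> h (Suc n)) ` W n"
    and W_below: "\<And>n. \<forall>a\<in>\<Union>(W n). \<forall>b\<in>h (Suc n). a < b"
  shows "block_sequence h" and "A \<in> FU h \<Longrightarrow> \<exists>n. A \<in> W n"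
proof -
  have W_mono: "W m \<subseteq> W n" if "m \<le> n" for m n
    using that by (induction n rule: dec_induct) (auto simp: W_Suc)
  have disjoint: "h m \<inter> h n = {}" if "m < n" for m n
  proof -
    obtain k where k: "n = Suc k" "m \<le> k" using \<open>m < n\<close> by (cases n) auto
    have "h m \<in> W k" using W_mono[OF k(2)] h_in_W[of m] by blast
    then show ?thesis using W_below[of k] k(1) by fastforce
  qed
  show "block_sequence h"
    using blocks disjoint unfolding block_sequence_def block_above_def
    by (metis Int_commute linorder_neqE_nat)
  assume "A \<in> FU h"
  then obtain G where G: "finite G" "G \<noteq> {}" "A = \<Union>(h ` G)" unfolding FU_iff by blast
  have "\<Union>(h ` G) \<in> W (Max G)"
    by (rule union_in_family[OF h_in_W[of 0] W_Suc]) (use G in auto)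
  with G(3) show "\<exists>n. A \<in> W n" by blast
qed

(* The recursive construction: the state is the latest block together with the finite family of
   all unions so far, all of which satisfy the invariant property P.  The next block is chosen
   p-generically: it satisfies P, lies above everything used so far and keeps P for all unions. *)
lemma growing_family_exists:
  assumes p: "p \<in> tail_ultrafilters" and P: "eventually P p"
    and step: "\<forall>F. P F \<longrightarrow> eventually (\<lambda>G. P (F \<union> G)) p"
  shows "\<exists>f :: nat \<Rightarrow> nat set \<times> nat set set.
    \<forall>n. fst (f n) \<in> snd (f n) \<and> block_above 0 (fst (f n)) \<and> (\<forall>Y\<in>snd (f n). P Y)
      \<and> snd (f (Suc n)) = snd (f n) \<union> {fst (f (Suc n))} \<union> (\<lambda>Y. Y \<union> fst (f (Suc n))) ` snd (f n)
      \<and> (\<forall>a\<in>\<Union>(snd (f n)). \<forall>b\<in>fst (f (Suc n)). a < b)"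
proof -
  have tails: "\<And>n. eventually (block_above n) p" using p by (auto simp: tail_ultrafilters_def)
  have pick: "\<exists>x. R x" if "eventually R p" for R
    using eventually_happens'[OF _ that] p by (auto simp: tail_ultrafilters_def ultrafilter_def)
  define Inv where "Inv = (\<lambda>(n::nat) (x :: nat set \<times> nat set set).
     finite (snd x) \<and> fst x \<in> snd x \<and> block_above 0 (fst x) \<and> (\<forall>Y\<in>snd x. P Y \<and> finite Y))"
  define Next where "Next = (\<lambda>(n::nat) (x :: nat set \<times> nat set set) (y :: nat set \<times> nat set set).
     (\<forall>a\<in>\<Union>(snd x). \<forall>b\<in>fst y. a < b) \<and> snd y = snd x \<union> {fst y} \<union> (\<lambda>Y. Y \<union> fst y) ` snd x)"
  have "\<exists>f. \<forall>n. Inv n (f n) \<and> Next n (f n) (f (Suc n))"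
  proof (rule dependent_nat_choice)
    obtain F where "P F" "block_above 0 F"
      using pick[OF eventually_conj[OF P tails]] by blast
    then have "Inv 0 (F, {F})" by (auto simp: Inv_def block_above_def)
    then show "\<exists>x. Inv 0 x" by blast
  next
    fix x n assume "Inv n x"
    then obtain B W where x: "x = (B, W)" and W: "finite W" "B \<in> W" "block_above 0 B"
      "\<forall>Y\<in>W. P Y \<and> finite Y" by (cases x) (auto simp: Inv_def)
    define m where "m = Max (\<Union>W)"
    have "eventually (\<lambda>G. \<forall>Y\<in>W. P (Y \<union> G)) p"
      using W step by (intro eventually_ball_finite) auto
    then obtain G where G: "P G" "block_above m G" "\<forall>Y\<in>W. P (Y \<union> G)"
      using pick[OF eventually_conj[OF P eventually_conj[OF tails]]] by blast
    have "a < b" if "a \<in> \<Union>W" "b \<in> G" for a b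
    proof -
      have "a \<le> m" unfolding m_def using W that(1) by (auto intro: Max_ge)
      also have "m < b" using G(2) that(2) by (simp add: block_above_def)
      finally show ?thesis .
    qed
    then have "Inv (Suc n) (G, W \<union> {G} \<union> (\<lambda>Y. Y \<union> G) ` W) \<and> Next n x (G, W \<union> {G} \<union> (\<lambda>Y. Y \<union> G) ` W)"
      using W G by (auto simp: Inv_def Next_def x block_above_def)
    then show "\<exists>y. Inv (Suc n) y \<and> Next n x y" by blast
  qed
  then obtain f where f: "\<forall>n. Inv n (f n) \<and> Next n (f n) (f (Suc n))" by blast
  show ?thesis using f unfolding Inv_def Next_def by (intro exI[of _ f]) auto
qed

lemma FU_sequence_in_invariant:
  assumes p: "p \<in> tail_ultrafilters" and P: "eventually P p"
    and step: "\<forall>F. P F \<longrightarrow> eventually (\<lambda>G. P (F \<union> G)) p"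
  shows "\<exists>h. block_sequence h \<and> (\<forall>A\<in>FU h. P A)"
proof -
  obtain f :: "nat \<Rightarrow> nat set \<times> nat set set" where f:
    "\<forall>n. fst (f n) \<in> snd (f n) \<and> block_above 0 (fst (f n)) \<and> (\<forall>Y\<in>snd (f n). P Y)
      \<and> snd (f (Suc n)) = snd (f n) \<union> {fst (f (Suc n))} \<union> (\<lambda>Y. Y \<union> fst (f (Suc n))) ` snd (f n)
      \<and> (\<forall>a\<in>\<Union>(snd (f n)). \<forall>b\<in>fst (f (Suc n)). a < b)"
    using growing_family_exists[OF p P step] by (elim exE)
  define h where "h = (\<lambda>n. fst (f n))"
  define W where "W = (\<lambda>n. snd (f n))"
  have growing: "\<And>n. h n \<in> W n" "\<And>n. block_above 0 (h n)"
    "\<And>n. W (Suc n) = W n \<union> {h (Suc n)} \<union> (\<lambda>Y. Y \<union> h (Suc n)) ` W n"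
    "\<And>n. \<forall>a\<in>\<Union>(W n). \<forall>b\<in>h (Suc n). a < b"
    using f unfolding h_def W_def by blast+
  have "P A" if A: "A \<in> FU h" for A
  proof -
    obtain n where "A \<in> W n" using block_sequence_from_growing_family(2)[of h W, OF growing A] by blast
    then show ?thesis using f unfolding W_def by blast
  qed
  then show ?thesis using block_sequence_from_growing_family(1)[of h W, OF growing] by blast
qed

theorem hindman:
  fixes \<chi> :: "nat set \<Rightarrow> 'c"
  assumes "finite C" and colour: "\<And>F. finite F \<Longrightarrow> F \<noteq> {} \<Longrightarrow> \<chi> F \<in> C"
  shows "\<exists>h k. block_sequence h \<and> (\<forall>A\<in>FU h. \<chi> A = k)"
proof -
  obtain p where p: "p \<in> tail_ultrafilters" and idem: "p \<oplus> p = p" using idempotent_exists by blast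
  have up: "ultrafilter p" and tail: "eventually (block_above 0) p"
    using p by (auto simp: tail_ultrafilters_def)
  from tail have "eventually (\<lambda>F. \<chi> F \<in> C) p"
    by eventually_elim (simp add: block_above_def colour)
  then obtain k where k: "eventually (\<lambda>F. \<chi> F = k) p"
    using ultrafilter_finite_range[OF up \<open>finite C\<close>] by blast
  obtain P where P: "\<forall>F. P F \<longrightarrow> \<chi> F = k" "eventually P p"
    "\<forall>F. P F \<longrightarrow> eventually (\<lambda>G. P (F \<union> G)) p"
    using idempotent_invariant_subset[OF idem k] by blast
  obtain h where "block_sequence h" "\<forall>A\<in>FU h. P A"
    using FU_sequence_in_invariant[OF p P(2,3)] by blast
  with P(1) show ?thesis by blast
qed

section \<open>Hindman's theorem inside an IP set\<close>

(* The finite unions of a block sequence form an IP set; the blocks themselves are the required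
   infinite disjoint family. *)
lemma IP_set_FU:
  assumes e: "block_sequence e"
  shows "IP_set (FU e)"
  unfolding IP_set_def
proof (intro conjI allI impI ballI)
  show "finite A" if "A \<in> FU e" for A
    using that e by (auto simp: FU_iff block_sequence_def)
next
  fix \<F> assume \<F>: "finite \<F> \<and> \<F> \<noteq> {} \<and> \<F> \<subseteq> FU e"
  then obtain \<G> where \<G>: "\<G> \<subseteq> {G. finite G \<and> G \<noteq> {}}" "finite \<G>" "\<F> = (\<lambda>G. \<Union>(e ` G)) ` \<G>"
    unfolding FU_def by (meson finite_subset_image)
  then have "\<Union>\<F> = \<Union>(e ` \<Union>\<G>)" and "finite (\<Union>\<G>)" and "\<Union>\<G> \<noteq> {}"
    using \<F> by auto
  then show "\<Union>\<F> \<in> FU e" unfolding FU_iff by blast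
next
  have inj: "inj e"
  proof (rule injI)
    fix i j assume "e i = e j"
    with e show "i = j" unfolding block_sequence_def by (metis Int_absorb)
  qed
  have "e i \<in> FU e" for i
    unfolding FU_iff by (rule exI[of _ "{i}"]) simp
  then have "range e \<subseteq> FU e" by blast
  moreover have "\<forall>A\<in>range e. \<forall>B\<in>range e. A \<noteq> B \<longrightarrow> A \<inter> B = {}"
  proof (intro ballI impI)
    fix A B assume "A \<in> range e" "B \<in> range e" "A \<noteq> B"
    then obtain i j where "A = e i" "B = e j" "i \<noteq> j" by blast
    then show "A \<inter> B = {}" using e by (simp add: block_sequence_def)
  qed
  moreover have "infinite (range e)" using finite_imageD[OF _ inj] by auto
  ultimately show "\<exists>D. infinite D \<and> D \<subseteq> FU e \<and> (\<forall>A\<in>D. \<forall>B\<in>D. A \<noteq> B \<longrightarrow> A \<inter> B = {})"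
    by blast
qed

lemma FU_subset_IP_set:
  assumes "IP_set S" and "range e \<subseteq> S"
  shows "FU e \<subseteq> S"
proof
  fix A assume "A \<in> FU e"
  then obtain G where G: "finite G" "G \<noteq> {}" "A = \<Union>(e ` G)" unfolding FU_iff by blast
  have union: "\<Union>\<F> \<in> S" if "finite \<F>" "\<F> \<noteq> {}" "\<F> \<subseteq> S" for \<F>
    using assms(1) that by (simp add: IP_set_def)
  show "A \<in> S" using union[of "e ` G"] G assms(2) by auto
qed

(* Every IP set contains a block sequence: enumerate its infinite disjoint family. *)
lemma IP_set_block_sequence:
  assumes "IP_set S"
  shows "\<exists>e. block_sequence e \<and> range e \<subseteq> S"
proof -
  obtain D where D: "infinite D" "D \<subseteq> S" "\<forall>A\<in>D. \<forall>B\<in>D. A \<noteq> B \<longrightarrow> A \<inter> B = {}"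
    using assms by (auto simp: IP_set_def)
  have "infinite (D - {{}})" using D(1) by simp
  then obtain e :: "nat \<Rightarrow> nat set" where e: "inj e" "range e \<subseteq> D - {{}}"
    using infinite_countable_subset by blast
  have "block_sequence e"
    unfolding block_sequence_def
  proof (intro conjI allI impI)
    show "finite (e i)" "e i \<noteq> {}" for i
      using e(2) D(2) assms by (auto simp: IP_set_def)
    show "e i \<inter> e j = {}" if "i \<noteq> j" for i j
    proof -
      have "e i \<noteq> e j" using e(1) that by (simp add: inj_eq)
      moreover have "e i \<in> D" "e j \<in> D" using e(2) by auto
      ultimately show ?thesis using D(3) by blast
    qed
  qed
  with e(2) D(2) show ?thesis by blast
qed

lemma block_sequence_condense:
  assumes d: "block_sequence d" and h: "block_sequence h"
  shows "block_sequence (\<lambda>n. \<Union>(d ` h n))"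
  unfolding block_sequence_def
proof (intro conjI allI impI)
  show "finite (\<Union>(d ` h n))" "\<Union>(d ` h n) \<noteq> {}" for n
    using d h by (auto simp: block_sequence_def)
  show "\<Union>(d ` h m) \<inter> \<Union>(d ` h n) = {}" if "m \<noteq> n" for m n
  proof -
    have "a \<noteq> b" if "a \<in> h m" "b \<in> h n" for a b
      using h \<open>m \<noteq> n\<close> that unfolding block_sequence_def by blast
    then show ?thesis using d unfolding block_sequence_def by blast
  qed
qed

lemma FU_condense: "FU (\<lambda>n. \<Union>(d ` h n)) = (\<lambda>A. \<Union>(d ` A)) ` FU h"
  unfolding FU_def image_image by (simp add: UN_UN_flatten)

(* Hindman's theorem for IP sets: every finite colouring of an IP set is constant on some IP
   subset.  Colour a finite index set G by c (\<Union> d ` G) and condense. *)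
theorem hindman_IP_set:
  assumes S: "IP_set S" and "finite C" and colour: "\<forall>A\<in>S. c A \<in> C"
  shows "\<exists>S'. IP_set S' \<and> S' \<subseteq> S \<and> (\<exists>k. \<forall>A\<in>S'. c A = k)"
proof -
  obtain d where d: "block_sequence d" "range d \<subseteq> S"
    using IP_set_block_sequence[OF S] by blast
  have FU_d: "FU d \<subseteq> S" using FU_subset_IP_set[OF S d(2)] .
  have index_colour: "c (\<Union>(d ` G)) \<in> C" if "finite G" "G \<noteq> {}" for G
  proof -
    have "\<Union>(d ` G) \<in> FU d" using that unfolding FU_iff by blast
    then show ?thesis using FU_d colour by blast
  qed
  have "\<exists>h k. block_sequence h \<and> (\<forall>A\<in>FU h. c (\<Union>(d ` A)) = k)"
    by (rule hindman[OF \<open>finite C\<close> index_colour])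
  then obtain h k where h: "block_sequence h" and k: "\<forall>A\<in>FU h. c (\<Union>(d ` A)) = k"
    by (elim exE conjE)
  define e where "e = (\<lambda>n. \<Union>(d ` h n))"
  have "IP_set (FU e)"
    unfolding e_def using block_sequence_condense[OF d(1) h] by (rule IP_set_FU)
  moreover have "FU e \<subseteq> S"
  proof (rule FU_subset_IP_set[OF S])
    have "e n \<in> FU d" for n
      unfolding FU_iff e_def using h by (intro exI[of _ "h n"]) (simp add: block_sequence_def)
    then show "range e \<subseteq> S" using FU_d by blast
  qed
  moreover have "\<forall>A\<in>FU e. c A = k"
    using k by (auto simp: e_def FU_condense)
  ultimately show ?thesis by blast
qed

theorem lemma2p4:
  fixes S :: "nat set set" and r :: nat and c :: "nat set \<Rightarrow> nat"
  assumes "IP_set S" and "r \<ge> 1" and "\<forall>A\<in>S. c A \<in> {1..r}"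
  shows "(\<exists>S'. IP_set S' \<and> S' \<subseteq> S \<and> (\<exists>k. \<forall>A\<in>S'. c A = k))
       \<or> (\<exists>\<B> \<T>. finite \<B> \<and> \<B> \<subseteq> S \<and> IP_set \<T> \<and> \<T> \<subseteq> minus_family S \<B>
              \<and> full_matches c \<B> \<T>)"
  using hindman_IP_set[OF assms(1) finite_atLeastAtMost assms(3)] by blast

end
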